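(* Let $n$ be even and $p=n/2$. (1) If $\mathcal{A}\subseteq\mathcal{K}^n_{p-1}$ is a set of $(p-1)$-faces with $|\mathcal{A}|\le n/32$, then $|\partial^+\mathcal{A}|\ge|\mathcal{A}|\cdot(n/2+1)\cdot(15/16)$. (2) If $\mathcal{A}\subseteq\mathcal{K}^n_{p+1}$ is a set of $(p+1)$-faces with $|\mathcal{A}|\le n/8$, then $|\partial^-\mathcal{A}|\ge 2\cdot|\mathcal{A}|\cdot(n/2+1)\cdot(15/16)$.
   Context: An $r$-face of the $n$-dimensional binary cube is a word in $\{0,1,*\}^n$ with exactly $r$ entries equal to $*$; $\mathcal{K}^n_r$ is the set of all $r$-faces. The upper shadow $\partial^+$ of an $r$-face is the set of $(r+1)$-faces obtained by replacing one non-$*$ entry by $*$; the lower shadow $\partial^-$ of an $r$-face is the set of $(r-1)$-faces obtained by replacing one $*$ entry by $0$ or by $1$. For a set $\mathcal{A}$ of faces, $\partial^\pm\mathcal{A}$ is the union of the shadows of its elements. *)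

theory Defs
  imports Complex_Main
begin

datatype sym = Zero | One | Star

definition faces :: "nat \<Rightarrow> nat \<Rightarrow> sym list set" where
  "faces n r = {w. length w = n \<and> length (filter (\<lambda>c. c = Star) w) = r}"

definition upper_shadow_face :: "sym list \<Rightarrow> sym list set" where
  "upper_shadow_face w = {w[i := Star] | i. i < length w \<and> w ! i \<noteq> Star}"

definition lower_shadow_face :: "sym list \<Rightarrow> sym list set" where
  "lower_shadow_face w = {w[i := c] | i c. i < length w \<and> w ! i = Star \<and> c \<in> {Zero, One}}"

definition upper_shadow :: "sym list set \<Rightarrow> sym list set" where
  "upper_shadow A = (\<Union>w\<in>A. upper_shadow_face w)"

definition lower_shadow :: "sym list set \<Rightarrow> sym list set" where
  "lower_shadow A = (\<Union>w\<in>A. lower_shadow_face w)"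

end

theory Submission
  imports Defs
begin

text \<open>Distinct faces share at most one upper and at most one lower neighbour, so the shadows of
  the faces in \<open>\<A>\<close> overlap in at most \<open>|\<A>| choose 2\<close> elements. Since every \<open>r\<close>-face has
  \<open>n - r\<close> upper and \<open>2r\<close> lower neighbours, the second Bonferroni inequality bounds the
  shadow below by \<open>|\<A>| (n - r) - |\<A>| choose 2\<close>, respectively \<open>2 r |\<A>| - |\<A>| choose 2\<close>;
  for \<open>r = n/2 \<mp> 1\<close> and \<open>|\<A>|\<close> small compared with \<open>n\<close> the correction term costs at most
  a sixteenth of the main term.\<close>

lemma card_UN_Bonferroni:
  assumes "finite A"
    and "\<And>a. a \<in> A \<Longrightarrow> finite (f a)"
    and "\<And>a. a \<in> A \<Longrightarrow> m \<le> card (f a)"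
    and "\<And>a b. a \<in> A \<Longrightarrow> b \<in> A \<Longrightarrow> a \<noteq> b \<Longrightarrow> card (f a \<inter> f b) \<le> t"
  shows "card A * m \<le> card (\<Union> (f ` A)) + t * (card A choose 2)"
  using assms
proof (induction A rule: finite_induct)
  case empty
  then show ?case by simp
next
  case (insert x F)
  define U where "U = \<Union> (f ` F)"
  have IH: "card F * m \<le> card U + t * (card F choose 2)"
    using insert unfolding U_def by auto
  have "card (f x \<inter> U) \<le> (\<Sum>b\<in>F. card (f x \<inter> f b))"
    unfolding U_def Int_UN_distrib using card_UN_le[OF \<open>finite F\<close>] by blast
  also have "\<dots> \<le> (\<Sum>b\<in>F. t)"
    using insert by (intro sum_mono) (metis insertCI)
  finally have overlap: "card (f x \<inter> U) \<le> t * card F"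
    by (simp add: mult.commute)
  have "card (f x) + card U = card (f x \<union> U) + card (f x \<inter> U)"
    using insert unfolding U_def by (intro card_Un_Int) auto
  moreover have "m \<le> card (f x)"
    using insert by simp
  moreover have "t * (Suc (card F) choose 2) = t * card F + t * (card F choose 2)"
    by (simp add: numeral_2_eq_2 algebra_simps)
  ultimately have "Suc (card F) * m \<le> card (f x \<union> U) + t * (Suc (card F) choose 2)"
    using IH overlap by simp
  then show ?case
    using insert unfolding U_def by simp
qed

lemma real_choose_two: "real (k choose 2) = real k * (real k - 1) / 2"
  by (induction k) (simp_all add: numeral_2_eq_2 field_simps)

lemma card_UN_ge_pairwise_Int_le_1:
  fixes \<epsilon> :: real
  assumes "finite A"
    and "\<And>a. a \<in> A \<Longrightarrow> finite (f a)"
    and "\<And>a. a \<in> A \<Longrightarrow> m \<le> card (f a)"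
    and "\<And>a b. a \<in> A \<Longrightarrow> b \<in> A \<Longrightarrow> a \<noteq> b \<Longrightarrow> card (f a \<inter> f b) \<le> 1"
    and small: "real (card A) - 1 \<le> 2 * \<epsilon> * m"
  shows "(1 - \<epsilon>) * card A * m \<le> card (\<Union> (f ` A))"
proof -
  have "card A * m \<le> card (\<Union> (f ` A)) + 1 * (card A choose 2)"
    by (rule card_UN_Bonferroni) (use assms in auto)
  then have bonferroni: "real (card A) * m \<le> card (\<Union> (f ` A)) + real (card A choose 2)"
    by (metis mult_1 of_nat_add of_nat_le_iff of_nat_mult)
  have "real (card A choose 2) = real (card A) * ((real (card A) - 1) / 2)"
    by (simp add: real_choose_two)
  also have "\<dots> \<le> real (card A) * (\<epsilon> * m)"
    using small by (intro mult_left_mono) auto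
  finally show ?thesis
    using bonferroni by (simp add: algebra_simps)
qed

lemma finite_faces: "finite (faces n r)"
proof -
  have "faces n r \<subseteq> {w. set w \<subseteq> {Zero, One, Star} \<and> length w = n}"
    unfolding faces_def using sym.exhaust by blast
  then show ?thesis
    using finite_lists_length_eq[of "{Zero, One, Star}" n] finite_subset by blast
qed

lemma upper_shadow_face_eq_image:
  "upper_shadow_face w = (\<lambda>i. w[i := Star]) ` {i. i < length w \<and> w ! i \<noteq> Star}"
  unfolding upper_shadow_face_def by auto

lemma lower_shadow_face_eq_image:
  "lower_shadow_face w = (\<lambda>(i, c). w[i := c]) ` ({i. i < length w \<and> w ! i = Star} \<times> {Zero, One})"
  unfolding lower_shadow_face_def by auto

lemma finite_upper_shadow_face: "finite (upper_shadow_face w)"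
  unfolding upper_shadow_face_eq_image by simp

lemma finite_lower_shadow_face: "finite (lower_shadow_face w)"
  unfolding lower_shadow_face_eq_image by simp

lemma card_upper_shadow_face:
  assumes "w \<in> faces n r"
  shows "card (upper_shadow_face w) = n - r"
proof -
  have "inj_on (\<lambda>i. w[i := Star]) {i. i < length w \<and> w ! i \<noteq> Star}"
    by (rule inj_onI) (metis (mono_tags) mem_Collect_eq nth_list_update_eq nth_list_update_neq)
  then have "card (upper_shadow_face w) = length (filter (\<lambda>c. c \<noteq> Star) w)"
    by (simp add: upper_shadow_face_eq_image card_image length_filter_conv_card)
  also have "\<dots> = n - r"
    using assms sum_length_filter_compl[of "\<lambda>c. c = Star" w] unfolding faces_def by auto
  finally show ?thesis .
qed

lemma card_lower_shadow_face:
  assumes "w \<in> faces n r"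
  shows "card (lower_shadow_face w) = 2 * r"
proof -
  have "inj_on (\<lambda>(i, c). w[i := c]) ({i. i < length w \<and> w ! i = Star} \<times> {Zero, One})"
  proof (rule inj_onI, clarify)
    fix i c j d
    assume "w[i := c] = w[j := d]" "i < length w" "w ! i = Star" "c \<in> {Zero, One}"
      "j < length w" "w ! j = Star" "d \<in> {Zero, One}"
    then show "i = j \<and> c = d"
      by (metis insert_iff nth_list_update_eq nth_list_update_neq singletonD sym.distinct(3,5))
  qed
  then have "card (lower_shadow_face w) = 2 * length (filter (\<lambda>c. c = Star) w)"
    by (simp add: lower_shadow_face_eq_image card_image card_cartesian_product
        length_filter_conv_card)
  then show ?thesis
    using assms unfolding faces_def by simp
qed

lemma list_update_cancel:
  assumes "xs[i := a] = ys[i := b]" and "xs ! i = ys ! i"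
  shows "xs = ys"
  by (metis assms list_update_id list_update_overwrite)

lemma upper_shadow_face_Int_subset:
  assumes "u \<noteq> v" and "length u = length v"
  shows "upper_shadow_face u \<inter> upper_shadow_face v
           \<subseteq> {map2 (\<lambda>a b. if a = b then a else Star) u v}"
proof
  fix w assume "w \<in> upper_shadow_face u \<inter> upper_shadow_face v"
  then obtain i j where i: "w = u[i := Star]" "i < length u" "u ! i \<noteq> Star"
    and j: "w = v[j := Star]" "j < length v" "v ! j \<noteq> Star"
    unfolding upper_shadow_face_def by blast
  then have updates: "u[i := Star] = v[j := Star]"
    by simp
  have w_i: "w ! i = Star"
    using i by simp
  have w_j: "w ! j = Star"
    using j by simp
  have w_u: "w ! k = u ! k" if "k \<noteq> i" for k
    using i that by simp
  have w_v: "w ! k = v ! k" if "k \<noteq> j" for k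
    using j that by simp
  have differ_i: "u ! i \<noteq> v ! i" and differ_j: "u ! j \<noteq> v ! j"
  proof (atomize (full), cases "i = j")
    case True
    then show "u ! i \<noteq> v ! i \<and> u ! j \<noteq> v ! j"
      using list_update_cancel[of u i Star v Star] updates assms(1) by auto
  next
    case False
    then show "u ! i \<noteq> v ! i \<and> u ! j \<noteq> v ! j"
      using w_i w_j w_u w_v i(3) j(3) by metis
  qed
  have "w ! k = (if u ! k = v ! k then u ! k else Star)" for k
    using w_i w_j w_u w_v differ_i differ_j by (cases "k = i"; cases "k = j") (simp_all, metis)
  then show "w \<in> {map2 (\<lambda>a b. if a = b then a else Star) u v}"
    using i assms by (auto intro: nth_equalityI)
qed

lemma lower_shadow_face_Int_subset:
  assumes "u \<noteq> v" and "length u = length v"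
  shows "lower_shadow_face u \<inter> lower_shadow_face v
           \<subseteq> {map2 (\<lambda>a b. if a = Star then b else a) u v}"
proof
  fix w assume "w \<in> lower_shadow_face u \<inter> lower_shadow_face v"
  then obtain i j c d where i: "w = u[i := c]" "i < length u" "u ! i = Star" "c \<noteq> Star"
    and j: "w = v[j := d]" "j < length v" "v ! j = Star" "d \<noteq> Star"
    unfolding lower_shadow_face_def by blast
  then have updates: "u[i := c] = v[j := d]"
    by simp
  have w_i: "w ! i = c"
    using i by simp
  have w_j: "w ! j = d"
    using j by simp
  have w_u: "w ! k = u ! k" if "k \<noteq> i" for k
    using i that by simp
  have w_v: "w ! k = v ! k" if "k \<noteq> j" for k
    using j that by simp
  have "i \<noteq> j"
    using list_update_cancel[of u i c v d] updates i(3) j(3) assms(1) by auto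
  then have "w ! k = (if u ! k = Star then v ! k else u ! k)" for k
    using w_i w_j w_u w_v i(3,4) j(4) by (cases "k = i"; cases "k = j") (simp_all, metis)
  then show "w \<in> {map2 (\<lambda>a b. if a = Star then b else a) u v}"
    using i assms by (auto intro: nth_equalityI)
qed

lemma card_upper_shadow_ge:
  fixes \<epsilon> :: real
  assumes "A \<subseteq> faces n r" and "real (card A) - 1 \<le> 2 * \<epsilon> * real (n - r)"
  shows "(1 - \<epsilon>) * card A * real (n - r) \<le> card (upper_shadow A)"
  unfolding upper_shadow_def
proof (rule card_UN_ge_pairwise_Int_le_1)
  show "finite A"
    using assms(1) finite_faces finite_subset by blast
  show "n - r \<le> card (upper_shadow_face w)" if "w \<in> A" for w
    using that assms(1) card_upper_shadow_face by auto
  show "card (upper_shadow_face u \<inter> upper_shadow_face v) \<le> 1"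
    if "u \<in> A" "v \<in> A" "u \<noteq> v" for u v
  proof -
    have "length u = length v"
      using that assms(1) unfolding faces_def by auto
    then show ?thesis
      using subset_singletonD[OF upper_shadow_face_Int_subset[OF that(3)]] by auto
  qed
qed (use assms(2) finite_upper_shadow_face in auto)

lemma card_lower_shadow_ge:
  fixes \<epsilon> :: real
  assumes "A \<subseteq> faces n r" and "real (card A) - 1 \<le> 2 * \<epsilon> * real (2 * r)"
  shows "(1 - \<epsilon>) * card A * real (2 * r) \<le> card (lower_shadow A)"
  unfolding lower_shadow_def
proof (rule card_UN_ge_pairwise_Int_le_1)
  show "finite A"
    using assms(1) finite_faces finite_subset by blast
  show "2 * r \<le> card (lower_shadow_face w)" if "w \<in> A" for w
    using that assms(1) card_lower_shadow_face by auto
  show "card (lower_shadow_face u \<inter> lower_shadow_face v) \<le> 1"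
    if "u \<in> A" "v \<in> A" "u \<noteq> v" for u v
  proof -
    have "length u = length v"
      using that assms(1) unfolding faces_def by auto
    then show ?thesis
      using subset_singletonD[OF lower_shadow_face_Int_subset[OF that(3)]] by auto
  qed
qed (use assms(2) finite_lower_shadow_face in auto)

theorem mainTheorem3:
  fixes n p :: nat
  assumes "even n" and "p = n div 2"
  shows "(\<forall>A. A \<subseteq> faces n (p - 1) \<and> real (card A) \<le> real n / 32 \<longrightarrow>
            real (card (upper_shadow A)) \<ge> real (card A) * (real n / 2 + 1) * (15 / 16))
       \<and> (\<forall>A. A \<subseteq> faces n (p + 1) \<and> real (card A) \<le> real n / 8 \<longrightarrow>
            real (card (lower_shadow A)) \<ge> 2 * real (card A) * (real n / 2 + 1) * (15 / 16))"
proof (intro conjI allI impI)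
  fix A assume A: "A \<subseteq> faces n (p - 1) \<and> real (card A) \<le> real n / 32"
  show "real (card A) * (real n / 2 + 1) * (15 / 16) \<le> real (card (upper_shadow A))"
  proof (cases "n = 0")
    case True
    \<comment> \<open>truncated subtraction makes \<open>n - (p - 1) = 0\<close> here, but then \<open>A = {}\<close>\<close>
    then show ?thesis
      using A by simp
  next
    case False
    then have upper_degree: "real (n - (p - 1)) = real n / 2 + 1"
      using assms by auto
    have "(1 - 1 / 16) * card A * real (n - (p - 1)) \<le> card (upper_shadow A)"
      by (rule card_upper_shadow_ge) (use A upper_degree in auto)
    then show ?thesis
      unfolding upper_degree by (simp add: algebra_simps)
  qed
next
  fix A assume A: "A \<subseteq> faces n (p + 1) \<and> real (card A) \<le> real n / 8"
  have lower_degree: "real (2 * (p + 1)) = 2 * (real n / 2 + 1)"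
    using assms by auto
  have "(1 - 1 / 16) * card A * real (2 * (p + 1)) \<le> card (lower_shadow A)"
    by (rule card_lower_shadow_ge) (use A lower_degree in auto)
  then show "2 * real (card A) * (real n / 2 + 1) * (15 / 16) \<le> real (card (lower_shadow A))"
    unfolding lower_degree by (simp add: algebra_simps)
qed

end
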